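(* Let $f$ be in Model-2 (defined below) and assume $Z_\pm\in\mathbb{R}$. Then $\beta_2^{\min}\le 0\le\min\{Y_-,R_0,\lambda\}\le\beta_2^{\max}\le\beta_2^{hi}$. If moreover $Y_-\le R_0\le Z_+$, $Y_-\le\lambda\le Z_+$ and $Z_+>0$, then $[0,Y_-]\subset\mathcal{B}_f^-$ and $[\beta_1^{lo},Z_+]=\mathcal{B}_f^+$; hence $f$ is admissible.
   Context: Model-2: $f(X,I)=\sum_{i,j=0}^2f_{ij}X^iI^j$ with real coefficients satisfying $f_{20}=f_{22}=0$, $f_{21}=-\kappa<0$, $f_{02}\le0$, $f_{10}\le0$, $f_{11}+f_{12}\le0$, $f_{00}\ge0$, $\lambda:=f_{00}+f_{01}+f_{02}\ge0$, and $f_{12}=-\kappa Y_-$ where $Y_-:=\frac12\big(-(f_{11}+f_{12})-\sqrt{(f_{11}+f_{12})^2+4f_{02}}\big)$ is real. Thus $f=f_0(I)+f_1(I)X+f_2(I)X^2$ with $f_0=f_{00}+f_{01}I+f_{02}I^2$, $f_1=f_{10}+f_{11}I+f_{12}I^2$, $f_2=f_{21}I$. Put $P_f(I):=(f_0(I)-\lambda I)/(1-I)=f_{00}-f_{02}I$, $h_f(z,I):=P_f(I)+zf_1(I)+z^2(I+(1-I)f_2(I))$, $\mathcal{B}_f^+:=\{z\ge\lambda:h_f(z,I)\le0\ \forall I\in[0,1]\}$, $\mathcal{B}_f^-:=\{z\le\lambda:h_f(z,I)\ge0\ \forall I\in[0,1]\}$. A pair $(\beta_1,\beta_2)$, $\beta_1>\beta_2$,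 is $f$-compatible if $\beta_2\le\lambda\le\beta_1$ and $h_f(\beta_i,I)/(\beta_j-\beta_i)\ge0$ for all $I\in[0,1]$, $\{i,j\}=\{1,2\}$; $f$ is admissible if such a pair exists. $R_0:=-f_{00}/f_{10}$ (undefined if $f_{10}=0$), $Z_\pm:=\frac12\big(-(f_{10}+f_{11}+f_{12})\pm\sqrt{(f_{10}+f_{11}+f_{12})^2+4(f_{02}-f_{00})}\big)$, $\beta_1^{lo}:=\max\{\lambda,R_0,Z_-\}$, $\beta_2^{hi}:=\min\{\lambda,R_0,Z_-\}$. For $s\in\{+,-,0\}$ let $\mathcal{I}_s:=\{I\in[0,1]:\operatorname{sign}(I+(1-I)f_2(I))=s\}$ and $Z_-(I)\le Z_+(I)$ the zeros of $h_f(\cdot,I)$; $\mathcal{Z}_-:=\{Z_-(I):I\in\mathcal{I}_-\}$, $\mathcal{Z}_0:=\{Z_-(I):I\in\mathcal{I}_+\}\cup\{Z_+(I):I\in\mathcal{I}_-\}\cup\{-P_f(I)/f_1(I):I\in\mathcal{I}_0,f_1(I)<0\}$; $\beta_2^{\max}:=\inf(\{\lambda\}\cup\mathcal{Z}_0)$, $\beta_2^{\min}:=\sup\mathcal{Z}_-$ if $\mathcal{Z}_-\ne\emptyset$, else $-\infty$. *)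

theory Defs
  imports "HOL-Analysis.Analysis" "HOL-Library.Extended_Real"
begin

text \<open>A Model-2 function f(X,I) = sum_{i,j=0..2} f_ij X^i I^j is represented by its
  coefficient function  c :: nat => nat => real,  c i j = f_ij (only i,j <= 2 matter).\<close>

definition kappa :: "(nat \<Rightarrow> nat \<Rightarrow> real) \<Rightarrow> real" where
  "kappa c = - c 2 1"

definition lam :: "(nat \<Rightarrow> nat \<Rightarrow> real) \<Rightarrow> real" where
  "lam c = c 0 0 + c 0 1 + c 0 2"

definition Ym :: "(nat \<Rightarrow> nat \<Rightarrow> real) \<Rightarrow> real" where
  "Ym c = (- (c 1 1 + c 1 2) - sqrt ((c 1 1 + c 1 2)^2 + 4 * c 0 2)) / 2"

definition model2 :: "(nat \<Rightarrow> nat \<Rightarrow> real) \<Rightarrow> bool" where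
  "model2 c \<longleftrightarrow> c 2 0 = 0 \<and> c 2 2 = 0 \<and> c 2 1 < 0 \<and> c 0 2 \<le> 0 \<and> c 1 0 \<le> 0
     \<and> c 1 1 + c 1 2 \<le> 0 \<and> c 0 0 \<ge> 0 \<and> lam c \<ge> 0
     \<and> (c 1 1 + c 1 2)^2 + 4 * c 0 2 \<ge> 0
     \<and> c 1 2 = - kappa c * Ym c"

definition f0 :: "(nat \<Rightarrow> nat \<Rightarrow> real) \<Rightarrow> real \<Rightarrow> real" where
  "f0 c I = c 0 0 + c 0 1 * I + c 0 2 * I^2"
definition f1 :: "(nat \<Rightarrow> nat \<Rightarrow> real) \<Rightarrow> real \<Rightarrow> real" where
  "f1 c I = c 1 0 + c 1 1 * I + c 1 2 * I^2"
definition f2 :: "(nat \<Rightarrow> nat \<Rightarrow> real) \<Rightarrow> real \<Rightarrow> real" where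
  "f2 c I = c 2 1 * I"

text \<open>P_f(I) := (f_0(I) - lambda I)/(1-I) = f_00 - f_02 I (polynomial identity; we use the
  polynomial form, which is also the value at I = 1).\<close>
definition Pf :: "(nat \<Rightarrow> nat \<Rightarrow> real) \<Rightarrow> real \<Rightarrow> real" where
  "Pf c I = c 0 0 - c 0 2 * I"

definition lc :: "(nat \<Rightarrow> nat \<Rightarrow> real) \<Rightarrow> real \<Rightarrow> real" where
  "lc c I = I + (1 - I) * f2 c I"

definition hf :: "(nat \<Rightarrow> nat \<Rightarrow> real) \<Rightarrow> real \<Rightarrow> real \<Rightarrow> real" where
  "hf c z I = Pf c I + z * f1 c I + z^2 * lc c I"

definition Bplus :: "(nat \<Rightarrow> nat \<Rightarrow> real) \<Rightarrow> real set" where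
  "Bplus c = {z. z \<ge> lam c \<and> (\<forall>I\<in>{0..1}. hf c z I \<le> 0)}"
definition Bminus :: "(nat \<Rightarrow> nat \<Rightarrow> real) \<Rightarrow> real set" where
  "Bminus c = {z. z \<le> lam c \<and> (\<forall>I\<in>{0..1}. hf c z I \<ge> 0)}"

definition compatible :: "(nat \<Rightarrow> nat \<Rightarrow> real) \<Rightarrow> real \<Rightarrow> real \<Rightarrow> bool" where
  "compatible c b1 b2 \<longleftrightarrow> b1 > b2 \<and> b2 \<le> lam c \<and> lam c \<le> b1 \<and>
     (\<forall>I\<in>{0..1}. hf c b1 I / (b2 - b1) \<ge> 0 \<and> hf c b2 I / (b1 - b2) \<ge> 0)"

definition admissible :: "(nat \<Rightarrow> nat \<Rightarrow> real) \<Rightarrow> bool" where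
  "admissible c \<longleftrightarrow> (\<exists>b1 b2. compatible c b1 b2)"

text \<open>R_0 = -f_00/f_10; when f_10 = 0 it is undefined and we use the convention R_0 = +infinity
  (the limit as f_10 -> 0-, since f_00 >= 0).\<close>
definition R0 :: "(nat \<Rightarrow> nat \<Rightarrow> real) \<Rightarrow> ereal" where
  "R0 c = (if c 1 0 = 0 then \<infinity> else ereal (- c 0 0 / c 1 0))"

definition Zdisc :: "(nat \<Rightarrow> nat \<Rightarrow> real) \<Rightarrow> real" where
  "Zdisc c = (c 1 0 + c 1 1 + c 1 2)^2 + 4 * (c 0 2 - c 0 0)"
definition Zp :: "(nat \<Rightarrow> nat \<Rightarrow> real) \<Rightarrow> real" where
  "Zp c = (- (c 1 0 + c 1 1 + c 1 2) + sqrt (Zdisc c)) / 2"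
definition Zm :: "(nat \<Rightarrow> nat \<Rightarrow> real) \<Rightarrow> real" where
  "Zm c = (- (c 1 0 + c 1 1 + c 1 2) - sqrt (Zdisc c)) / 2"

definition beta1lo :: "(nat \<Rightarrow> nat \<Rightarrow> real) \<Rightarrow> ereal" where
  "beta1lo c = max (ereal (lam c)) (max (R0 c) (ereal (Zm c)))"
definition beta2hi :: "(nat \<Rightarrow> nat \<Rightarrow> real) \<Rightarrow> ereal" where
  "beta2hi c = min (ereal (lam c)) (min (R0 c) (ereal (Zm c)))"

definition is_small_zero :: "(nat \<Rightarrow> nat \<Rightarrow> real) \<Rightarrow> real \<Rightarrow> real \<Rightarrow> bool" where
  "is_small_zero c I z \<longleftrightarrow> hf c z I = 0 \<and> (\<forall>w. hf c w I = 0 \<longrightarrow> z \<le> w)"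
definition is_large_zero :: "(nat \<Rightarrow> nat \<Rightarrow> real) \<Rightarrow> real \<Rightarrow> real \<Rightarrow> bool" where
  "is_large_zero c I z \<longleftrightarrow> hf c z I = 0 \<and> (\<forall>w. hf c w I = 0 \<longrightarrow> w \<le> z)"

definition ZsetM :: "(nat \<Rightarrow> nat \<Rightarrow> real) \<Rightarrow> real set" where
  "ZsetM c = {z. \<exists>I\<in>{0..1}. lc c I < 0 \<and> is_small_zero c I z}"

definition Zset0 :: "(nat \<Rightarrow> nat \<Rightarrow> real) \<Rightarrow> real set" where
  "Zset0 c = {z. \<exists>I\<in>{0..1}. lc c I > 0 \<and> is_small_zero c I z}
           \<union> {z. \<exists>I\<in>{0..1}. lc c I < 0 \<and> is_large_zero c I z}
           \<union> {z. \<exists>I\<in>{0..1}. lc c I = 0 \<and> f1 c I < 0 \<and> z = - Pf c I / f1 c I}"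

definition beta2max :: "(nat \<Rightarrow> nat \<Rightarrow> real) \<Rightarrow> ereal" where
  "beta2max c = Inf (ereal ` ({lam c} \<union> Zset0 c))"

text \<open>Sup of the empty set of ereals is -infinity, matching the convention.\<close>
definition beta2min :: "(nat \<Rightarrow> nat \<Rightarrow> real) \<Rightarrow> ereal" where
  "beta2min c = Sup (ereal ` ZsetM c)"

end

theory Submission
  imports Defs "HOL-Library.Quadratic_Discriminant"
begin

(* Since f_12 = f_21 Y_-, h(z,.) satisfies the interpolation identity
     h(z,I) = (1-I) h(z,0) + I h(z,1) + I (1-I) f_21 z (z - Y_-),
   where h(z,0) = f_00 + f_10 z changes sign at R_0 and h(z,1) = h(z,0) + (z - Y_-)(z - Y_+)
   has the roots Z_-, Z_+.  For 0 <= z <= min(Y_-, R_0) all three terms are nonnegative,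
   and for max(Y_-, R_0, Z_-) <= z <= Z_+ all are nonpositive; this describes B^- and B^+
   and yields the compatible pair (Z_+, 0).  The same identity shows that h(.,I) has no zero
   in [0, min(Y_-, R_0)) when I > 0, while h(0,I) = P_f(I) >= 0 places the zeros defining
   beta_2^max in [0, oo) and those defining beta_2^min in (-oo, 0]. *)

lemma monic_quadratic_factor:
  fixes b e d z :: real
  assumes "d = b^2 - 4 * e" and "0 \<le> d"
  shows "z^2 + b * z + e = (z - (- b - sqrt d) / 2) * (z - (- b + sqrt d) / 2)"
proof -
  have "(z - (- b - sqrt d) / 2) * (z - (- b + sqrt d) / 2) = z^2 + b * z + (b^2 - (sqrt d)^2) / 4"
    by (simp add: field_simps power2_eq_square)
  then show ?thesis
    using assms by simp
qed

lemma quadratic_roots_opposite_signs: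
  fixes a b e :: real
  assumes "a < 0" and "0 \<le> e"
  shows "\<exists>x y. x \<le> 0 \<and> 0 \<le> y \<and> a * x^2 + b * x + e = 0 \<and> a * y^2 + b * y + e = 0"
proof -
  have "b^2 \<le> discrim a b e"
    using assms by (simp add: discrim_def mult_nonpos_nonneg)
  then have disc: "0 \<le> discrim a b e" and "\<bar>b\<bar> \<le> sqrt (discrim a b e)"
    using zero_le_power2[of b] real_sqrt_le_mono[of "b^2"] by (linarith, simp)
  define x where "x = (- b + sqrt (discrim a b e)) / (2 * a)"
  define y where "y = (- b - sqrt (discrim a b e)) / (2 * a)"
  have "x \<le> 0" "0 \<le> y"
    using assms(1) \<open>\<bar>b\<bar> \<le> sqrt (discrim a b e)\<close>
    by (auto simp: x_def y_def divide_nonneg_neg divide_nonpos_neg)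
  moreover have "a * x^2 + b * x + e = 0" "a * y^2 + b * y + e = 0"
    using discriminant_nonneg[OF _ disc, of x] discriminant_nonneg[OF _ disc, of y] assms(1)
      x_def y_def by auto
  ultimately show ?thesis
    by blast
qed

lemma lc_0 [simp]: "lc c 0 = 0" and lc_1 [simp]: "lc c 1 = 1"
  by (simp_all add: lc_def f2_def)

lemma hf_quadratic: "hf c z I = lc c I * z^2 + f1 c I * z + Pf c I"
  by (simp add: hf_def algebra_simps)

lemma hf_at_0: "hf c z 0 = c 0 0 + c 1 0 * z"
  by (simp add: hf_def Pf_def f1_def)

lemma hf_at_1: "hf c z 1 = z^2 + (c 1 0 + c 1 1 + c 1 2) * z + (c 0 0 - c 0 2)"
  by (simp add: hf_def Pf_def f1_def algebra_simps)

lemma hf_interpolation: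
  "hf c z I = (1 - I) * hf c z 0 + I * hf c z 1 + I * (1 - I) * (z * (c 2 1 * z - c 1 2))"
  by (simp add: hf_def Pf_def f1_def lc_def f2_def algebra_simps power2_eq_square)

lemma hf_at_1_Z_factor:
  assumes "0 \<le> Zdisc c"
  shows "hf c z 1 = (z - Zm c) * (z - Zp c)"
  using monic_quadratic_factor[OF _ assms, of "c 1 0 + c 1 1 + c 1 2" "c 0 0 - c 0 2" z]
  by (simp add: hf_at_1 Zm_def Zp_def Zdisc_def algebra_simps)

lemma Zm_le_Zp: "0 \<le> Zdisc c \<Longrightarrow> Zm c \<le> Zp c"
  by (simp add: Zm_def Zp_def)

lemma hf_at_1_nonpos_iff:
  assumes "0 \<le> Zdisc c"
  shows "hf c z 1 \<le> 0 \<longleftrightarrow> Zm c \<le> z \<and> z \<le> Zp c"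
  using Zm_le_Zp[OF assms] by (auto simp: hf_at_1_Z_factor[OF assms] mult_le_0_iff)

lemma Zm_in_Zset0:
  assumes "0 \<le> Zdisc c"
  shows "Zm c \<in> Zset0 c"
proof -
  have "is_small_zero c 1 (Zm c)"
    using Zm_le_Zp[OF assms] by (auto simp: is_small_zero_def hf_at_1_Z_factor[OF assms])
  then show ?thesis
    unfolding Zset0_def by (auto intro!: bexI[of _ 1])
qed

lemma compatible_if_mem_Bplus_Bminus:
  assumes "b1 \<in> Bplus c" and "b2 \<in> Bminus c" and "b2 < b1"
  shows "compatible c b1 b2"
  using assms by (auto simp: compatible_def Bplus_def Bminus_def divide_nonpos_neg)

definition Yp :: "(nat \<Rightarrow> nat \<Rightarrow> real) \<Rightarrow> real" where
  "Yp c = (- (c 1 1 + c 1 2) + sqrt ((c 1 1 + c 1 2)^2 + 4 * c 0 2)) / 2"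

context
  fixes c :: "nat \<Rightarrow> nat \<Rightarrow> real"
  assumes model2: "model2 c"
begin

lemma model2_signs:
  "c 2 1 < 0" "c 0 2 \<le> 0" "c 1 0 \<le> 0" "c 1 1 + c 1 2 \<le> 0" "0 \<le> c 0 0" "0 \<le> lam c"
  using model2 unfolding model2_def by blast+

lemma Y_disc_nonneg: "0 \<le> (c 1 1 + c 1 2)^2 + 4 * c 0 2"
  using model2 unfolding model2_def by (elim conjE) assumption

lemma c12_eq_c21_Ym: "c 1 2 = c 2 1 * Ym c"
  using model2 by (simp add: model2_def kappa_def)

lemma Y_quadratic_factor: "z^2 + (c 1 1 + c 1 2) * z - c 0 2 = (z - Ym c) * (z - Yp c)"
  using monic_quadratic_factor[OF _ Y_disc_nonneg, of "c 1 1 + c 1 2" "- c 0 2" z]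
  by (simp add: Ym_def Yp_def)

lemma Ym_le_Yp: "Ym c \<le> Yp c"
  using Y_disc_nonneg by (simp add: Ym_def Yp_def)

lemma Ym_bounds: "0 \<le> Ym c" "Ym c \<le> - (c 1 1 + c 1 2)"
proof -
  define s where "s = c 1 1 + c 1 2"
  define q where "q = sqrt (s^2 + 4 * c 0 2)"
  have "q \<le> sqrt (s^2)"
    unfolding q_def using model2_signs(2) by (intro real_sqrt_le_mono) simp
  then have "q \<le> - s"
    using model2_signs(4) by (simp add: s_def)
  moreover have "0 \<le> q" and "s \<le> 0"
    using Y_disc_nonneg model2_signs(4) by (simp_all add: q_def s_def)
  moreover have "Ym c = (- s - q) / 2"
    by (simp add: Ym_def q_def s_def)
  ultimately show "0 \<le> Ym c" and "Ym c \<le> - (c 1 1 + c 1 2)"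
    by (simp_all add: s_def)
qed

lemma hf_interpolation_model2:
  "hf c z I = (1 - I) * hf c z 0 + I * hf c z 1 + I * (1 - I) * (c 2 1 * z * (z - Ym c))"
proof -
  have "z * (c 2 1 * z - c 1 2) = c 2 1 * z * (z - Ym c)"
    unfolding c12_eq_c21_Ym by (simp add: algebra_simps)
  then show ?thesis
    using hf_interpolation[of c z I] by simp
qed

lemma hf_at_1_Y_factor: "hf c z 1 = hf c z 0 + (z - Ym c) * (z - Yp c)"
  unfolding hf_at_0 hf_at_1 Y_quadratic_factor[symmetric] by (simp add: algebra_simps)

lemma hf_nonneg_of_le_Ym:
  assumes "0 \<le> z" "z \<le> Ym c" "0 \<le> hf c z 0" "0 \<le> I" "I \<le> 1"
  shows "0 \<le> hf c z I"
proof -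
  have "0 \<le> (z - Ym c) * (z - Yp c)"
    using assms(2) Ym_le_Yp by (simp add: mult_nonpos_nonpos)
  then have "0 \<le> hf c z 1"
    using assms(3) hf_at_1_Y_factor by simp
  moreover have "0 \<le> c 2 1 * z * (z - Ym c)"
    using model2_signs(1) assms(1,2) by (simp add: mult_nonpos_nonneg mult_nonpos_nonpos)
  then have "0 \<le> I * (1 - I) * (c 2 1 * z * (z - Ym c))"
    using assms(4,5) by simp
  ultimately show ?thesis
    unfolding hf_interpolation_model2[of z I] using assms(3-5) by simp
qed

lemma hf_pos_of_less_Ym:
  assumes "0 \<le> z" "z < Ym c" "0 \<le> hf c z 0" "0 < I" "I \<le> 1"
  shows "0 < hf c z I"
proof -
  have "0 < (z - Ym c) * (z - Yp c)"
    using assms(2) Ym_le_Yp by (simp add: mult_neg_neg)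
  then have "0 < hf c z 1"
    using assms(3) hf_at_1_Y_factor by simp
  moreover have "0 \<le> c 2 1 * z * (z - Ym c)"
    using model2_signs(1) assms(1,2) by (simp add: mult_nonpos_nonneg mult_nonpos_nonpos)
  then have "0 \<le> I * (1 - I) * (c 2 1 * z * (z - Ym c))"
    using assms(4,5) by simp
  ultimately show ?thesis
    unfolding hf_interpolation_model2[of z I] using assms(3-5)
    by (simp add: add_nonneg_pos add_pos_nonneg)
qed

lemma hf_nonpos_of_ge_Ym:
  assumes "0 \<le> z" "Ym c \<le> z" "hf c z 0 \<le> 0" "hf c z 1 \<le> 0" "0 \<le> I" "I \<le> 1"
  shows "hf c z I \<le> 0"
proof -
  have "c 2 1 * z * (z - Ym c) \<le> 0"
    using model2_signs(1) assms(1,2) by (simp add: mult_nonpos_nonneg)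
  then have "I * (1 - I) * (c 2 1 * z * (z - Ym c)) \<le> 0"
    using assms(5,6) by (simp add: mult_nonneg_nonpos)
  then show ?thesis
    unfolding hf_interpolation_model2[of z I] using assms(3-6)
    by (simp add: add_nonpos_nonpos mult_nonneg_nonpos)
qed

lemma le_R0_iff: "ereal z \<le> R0 c \<longleftrightarrow> 0 \<le> hf c z 0"
proof (cases "c 1 0 = 0")
  case True
  then show ?thesis
    using model2_signs(5) by (simp add: R0_def hf_at_0)
next
  case False
  then have "c 1 0 < 0"
    using model2_signs(3) by simp
  then show ?thesis
    by (auto simp: R0_def hf_at_0 field_simps)
qed

lemma R0_le_iff: "R0 c \<le> ereal z \<longleftrightarrow> c 1 0 < 0 \<and> hf c z 0 \<le> 0"
proof (cases "c 1 0 = 0")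
  case True
  then show ?thesis
    by (simp add: R0_def)
next
  case False
  then have "c 1 0 < 0"
    using model2_signs(3) by simp
  then show ?thesis
    by (auto simp: R0_def hf_at_0 field_simps)
qed

lemma R0_nonneg: "0 \<le> R0 c"
  using le_R0_iff[of 0] model2_signs(5) by (simp add: hf_at_0 zero_ereal_def)

lemma Pf_nonneg: "0 \<le> I \<Longrightarrow> 0 \<le> Pf c I"
  using mult_nonpos_nonneg[of "c 0 2" I] model2_signs(2,5) by (simp add: Pf_def)

lemma f1_nonpos:
  assumes "0 \<le> I" "I \<le> 1" "0 \<le> lc c I"
  shows "f1 c I \<le> 0"
proof (cases "I = 0")
  case True
  then show ?thesis
    using model2_signs(3) by (simp add: f1_def)
next
  case False
  have "lc c I = I * (1 + c 2 1 * (1 - I))"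
    by (simp add: lc_def f2_def algebra_simps)
  then have "- c 2 1 * (1 - I) \<le> 1"
    using assms False by (simp add: zero_le_mult_iff)
  then have "Ym c * (- c 2 1 * (1 - I)) \<le> Ym c"
    using mult_left_mono[OF _ Ym_bounds(1)] by fastforce
  then have "c 1 1 + c 1 2 - c 2 1 * Ym c * (1 - I) \<le> 0"
    using Ym_bounds(2) by (simp add: algebra_simps)
  moreover have "f1 c I = c 1 0 + I * (c 1 1 + c 1 2 - c 2 1 * Ym c * (1 - I))"
    unfolding f1_def c12_eq_c21_Ym by (simp add: algebra_simps power2_eq_square)
  ultimately show ?thesis
    using assms(1) model2_signs(3) by (simp add: mult_nonneg_nonpos add_nonpos_nonpos)
qed

lemma hf_pos_of_neg:
  assumes "0 \<le> I" "I \<le> 1" "0 < lc c I" "z < 0"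
  shows "0 < hf c z I"
proof -
  have "0 \<le> f1 c I * z"
    using f1_nonpos assms by (simp add: mult_nonpos_nonpos)
  moreover have "0 < lc c I * z^2"
    using assms(3,4) by simp
  ultimately show ?thesis
    using Pf_nonneg[OF assms(1)] by (simp add: hf_quadratic)
qed

lemma hf_zeros_of_lc_neg:
  assumes "0 \<le> I" "lc c I < 0"
  shows "\<exists>x y. x \<le> 0 \<and> 0 \<le> y \<and> hf c x I = 0 \<and> hf c y I = 0"
  using quadratic_roots_opposite_signs[OF assms(2) Pf_nonneg[OF assms(1)], of "f1 c I"]
  by (simp add: hf_quadratic)

lemma hf_pos_below_Ym_R0:
  assumes "0 \<le> z" "z < Ym c" "ereal z < R0 c" "0 \<le> I" "I \<le> 1" "0 < I \<or> c 1 0 \<noteq> 0"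
  shows "0 < hf c z I"
proof (cases "0 < I")
  case True
  have "0 \<le> hf c z 0"
    using less_imp_le[OF assms(3)] le_R0_iff by blast
  then show ?thesis
    using hf_pos_of_less_Ym assms(1,2,5) True by blast
next
  case False
  then have "I = 0" "c 1 0 < 0"
    using assms(4,6) model2_signs(3) by auto
  then show ?thesis
    using R0_le_iff[of z] assms(3) by auto
qed

lemma Zset0_ge_min_Ym_R0:
  assumes "z \<in> Zset0 c"
  shows "min (ereal (Ym c)) (R0 c) \<le> ereal z"
proof (rule ccontr)
  assume "\<not> ?thesis"
  then have below: "z < Ym c" "ereal z < R0 c"
    by (simp_all add: not_le)
  have no_zero: "hf c z I \<noteq> 0" if "0 \<le> z" "I \<in> {0..1}" "0 < I \<or> c 1 0 \<noteq> 0" for I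
    using hf_pos_below_Ym_R0[OF _ below] that by force
  from assms consider
      (convex) I where "I \<in> {0..1}" "0 < lc c I" "is_small_zero c I z"
    | (concave) I where "I \<in> {0..1}" "lc c I < 0" "is_large_zero c I z"
    | (linear) I where "I \<in> {0..1}" "lc c I = 0" "f1 c I < 0" "z = - Pf c I / f1 c I"
    unfolding Zset0_def by blast
  then show False
  proof cases
    case convex
    then have zero: "hf c z I = 0" and "I \<noteq> 0"
      by (auto simp: is_small_zero_def)
    moreover have "0 \<le> z"
      using hf_pos_of_neg[of I z] convex zero by force
    ultimately show False
      using no_zero convex(1) by force
  next
    case concave
    then obtain y where "0 \<le> y" "hf c y I = 0"
      using hf_zeros_of_lc_neg by auto
    then have "0 \<le> z"
      using concave(3) by (force simp: is_large_zero_def)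
    moreover have "hf c z I = 0" and "I \<noteq> 0"
      using concave by (auto simp: is_large_zero_def)
    ultimately show False
      using no_zero concave(1) by force
  next
    case linear
    then have "hf c z I = 0"
      by (simp add: hf_quadratic)
    moreover have "0 \<le> z"
      using linear divide_nonneg_neg[OF Pf_nonneg] by simp
    moreover have "0 < I \<or> c 1 0 \<noteq> 0"
      using linear by (cases "I = 0") (auto simp: f1_def)
    ultimately show False
      using no_zero linear(1) by blast
  qed
qed

lemma ZsetM_nonpos:
  assumes "z \<in> ZsetM c"
  shows "z \<le> 0"
proof -
  obtain I where I: "I \<in> {0..1}" "lc c I < 0" "is_small_zero c I z"
    using assms unfolding ZsetM_def by blast
  then obtain x where "x \<le> 0" "hf c x I = 0"
    using hf_zeros_of_lc_neg by auto
  then show ?thesis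
    using I(3) by (force simp: is_small_zero_def)
qed

lemma R0_in_Zset0:
  assumes "c 1 0 \<noteq> 0"
  shows "- c 0 0 / c 1 0 \<in> Zset0 c"
  using assms model2_signs(3) unfolding Zset0_def by (auto simp: f1_def Pf_def intro!: bexI[of _ 0])

lemma beta2min_nonpos: "beta2min c \<le> 0"
  unfolding beta2min_def using ZsetM_nonpos by (auto intro!: Sup_least)

lemma min_Ym_R0_lam_le_beta2max: "min (ereal (Ym c)) (min (R0 c) (ereal (lam c))) \<le> beta2max c"
  unfolding beta2max_def
proof (rule Inf_greatest)
  fix x
  assume "x \<in> ereal ` ({lam c} \<union> Zset0 c)"
  then show "min (ereal (Ym c)) (min (R0 c) (ereal (lam c))) \<le> x"
    using Zset0_ge_min_Ym_R0 by (fastforce simp: min_le_iff_disj)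
qed

lemma beta2max_le_beta2hi:
  assumes "0 \<le> Zdisc c"
  shows "beta2max c \<le> beta2hi c"
proof -
  have below: "beta2max c \<le> ereal z" if "z \<in> {lam c} \<union> Zset0 c" for z
    unfolding beta2max_def using that by (intro Inf_lower) auto
  have "beta2max c \<le> R0 c"
    using below[OF UnI2[OF R0_in_Zset0]] by (cases "c 1 0 = 0") (auto simp: R0_def)
  then show ?thesis
    using below Zm_in_Zset0[OF assms] by (simp add: beta2hi_def)
qed

lemma Icc_0_Ym_subset_Bminus:
  assumes "ereal (Ym c) \<le> R0 c" and "Ym c \<le> lam c"
  shows "{0..Ym c} \<subseteq> Bminus c"
proof
  fix z
  assume z: "z \<in> {0..Ym c}"
  then have "ereal z \<le> R0 c"
    using order_trans[of "ereal z" "ereal (Ym c)" "R0 c"] assms(1) by simp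
  then show "z \<in> Bminus c"
    using z assms(2) hf_nonneg_of_le_Ym le_R0_iff by (auto simp: Bminus_def)
qed

lemma Bplus_eq_beta1lo_Zp:
  assumes "0 \<le> Zdisc c" and "c 1 0 \<noteq> 0" and "Ym c \<le> lam c"
  shows "{z. beta1lo c \<le> ereal z \<and> z \<le> Zp c} = Bplus c"
proof (intro set_eqI iffI)
  fix z
  assume "z \<in> {z. beta1lo c \<le> ereal z \<and> z \<le> Zp c}"
  then have z: "lam c \<le> z" "R0 c \<le> ereal z" "Zm c \<le> z" "z \<le> Zp c"
    by (auto simp: beta1lo_def)
  then have "hf c z 0 \<le> 0" and "hf c z 1 \<le> 0"
    using R0_le_iff hf_at_1_nonpos_iff[OF assms(1)] by auto
  moreover have "0 \<le> z" and "Ym c \<le> z"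
    using z(1) assms(3) Ym_bounds(1) by auto
  ultimately show "z \<in> Bplus c"
    using z(1) hf_nonpos_of_ge_Ym by (auto simp: Bplus_def)
next
  fix z
  assume "z \<in> Bplus c"
  then have z: "lam c \<le> z" "hf c z 0 \<le> 0" "hf c z 1 \<le> 0"
    unfolding Bplus_def by force+
  moreover have "R0 c \<le> ereal z"
    using z(2) assms(2) model2_signs(3) R0_le_iff by auto
  ultimately show "z \<in> {z. beta1lo c \<le> ereal z \<and> z \<le> Zp c}"
    using hf_at_1_nonpos_iff[OF assms(1)] by (auto simp: beta1lo_def)
qed

lemma compatible_Zp_0:
  assumes "0 \<le> Zdisc c" and "ereal (Ym c) \<le> R0 c" and "R0 c \<le> ereal (Zp c)"
    and "Ym c \<le> lam c" and "lam c \<le> Zp c" and "0 < Zp c"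
  shows "compatible c (Zp c) 0"
proof -
  have "c 1 0 \<noteq> 0"
    using R0_le_iff assms(3) by fastforce
  then have "Zp c \<in> Bplus c"
    using Bplus_eq_beta1lo_Zp[OF assms(1) _ assms(4)] assms(3,5) Zm_le_Zp[OF assms(1)]
    by (auto simp: beta1lo_def)
  moreover have "0 \<in> Bminus c"
    using Icc_0_Ym_subset_Bminus[OF assms(2,4)] Ym_bounds(1) by auto
  ultimately show ?thesis
    using compatible_if_mem_Bplus_Bminus assms(6) by blast
qed

end

theorem proposition5p8:
  fixes c :: "nat \<Rightarrow> nat \<Rightarrow> real"
  assumes "model2 c"
    and "Zdisc c \<ge> 0"
  shows "beta2min c \<le> 0
      \<and> 0 \<le> min (ereal (Ym c)) (min (R0 c) (ereal (lam c)))
      \<and> min (ereal (Ym c)) (min (R0 c) (ereal (lam c))) \<le> beta2max c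
      \<and> beta2max c \<le> beta2hi c
      \<and> (ereal (Ym c) \<le> R0 c \<and> R0 c \<le> ereal (Zp c) \<and> Ym c \<le> lam c \<and> lam c \<le> Zp c
          \<and> Zp c > 0 \<longrightarrow>
       {0..Ym c} \<subseteq> Bminus c \<and> {z. beta1lo c \<le> ereal z \<and> z \<le> Zp c} = Bplus c \<and> admissible c)"
proof -
  have "0 \<le> min (ereal (Ym c)) (min (R0 c) (ereal (lam c)))"
    using Ym_bounds(1) R0_nonneg model2_signs(6) assms(1) by simp
  moreover have "{0..Ym c} \<subseteq> Bminus c \<and> {z. beta1lo c \<le> ereal z \<and> z \<le> Zp c} = Bplus c
      \<and> admissible c"
    if "ereal (Ym c) \<le> R0 c" "R0 c \<le> ereal (Zp c)" "Ym c \<le> lam c" "lam c \<le> Zp c" "0 < Zp c"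
  proof -
    have "c 1 0 \<noteq> 0"
      using R0_le_iff[OF assms(1)] that(2) by fastforce
    then show ?thesis
      using Icc_0_Ym_subset_Bminus Bplus_eq_beta1lo_Zp compatible_Zp_0 assms that
      unfolding admissible_def by blast
  qed
  ultimately show ?thesis
    using beta2min_nonpos min_Ym_R0_lam_le_beta2max beta2max_le_beta2hi assms by blast
qed

end
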